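(* Let $V_1,V_2$ be closed subspaces of a Hilbert space $\mathcal H$, neither of which contains the other, with $\angle(V_1,V_2)>0$. For $w\in\mathcal H$ let $w_0=P_{V_1\cap V_2}(w)$, $w_1=P_{V_1}(w)$, and let $d_i(w)$ be the distance from $w$ to $V_i$ ($i=1,2$). Then $\|w_1-w_0\|\le\dfrac{\cos\angle(V_1,V_2)\,d_1(w)+d_2(w)}{\sin\angle(V_1,V_2)}$.
   Context: $P_V$ denotes orthogonal projection onto a closed subspace $V$. For closed subspaces $V_1,V_2$ neither of which contains the other, the (Friederichs) angle $\angle(V_1,V_2)\in[0,\pi/2]$ is defined by $\cos\angle(V_1,V_2)=\sup\{|\langle v_1,v_2\rangle| : v_i\in V_i,\ \|v_i\|=1,\ v_i\perp V_1\cap V_2\}$. *)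

theory Defs
  imports "HOL-Analysis.Analysis"
begin

definition orth_proj :: "'a::real_inner set \<Rightarrow> 'a \<Rightarrow> 'a" where
  "orth_proj V w = (THE p. p \<in> V \<and> (\<forall>v\<in>V. inner (w - p) v = 0))"

definition friedrichs_cos :: "'a::real_inner set \<Rightarrow> 'a set \<Rightarrow> real" where
  "friedrichs_cos V1 V2 = Sup {\<bar>inner v1 v2\<bar> | v1 v2.
      v1 \<in> V1 \<and> v2 \<in> V2 \<and> norm v1 = 1 \<and> norm v2 = 1 \<and>
      (\<forall>u\<in>V1 \<inter> V2. inner v1 u = 0) \<and> (\<forall>u\<in>V1 \<inter> V2. inner v2 u = 0)}"

definition friedrichs_angle :: "'a::real_inner set \<Rightarrow> 'a set \<Rightarrow> real" where
  "friedrichs_angle V1 V2 = arccos (friedrichs_cos V1 V2)"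

end

theory Submission
  imports Defs
begin

text \<open>Write \<open>P\<^sub>0, P\<^sub>1, P\<^sub>2\<close> for the projections onto \<open>V\<^sub>1 \<inter> V\<^sub>2, V\<^sub>1, V\<^sub>2\<close> and \<open>\<theta>\<close> for
  the angle. The vector \<open>u = P\<^sub>1 w - P\<^sub>0 w\<close> lies in \<open>V\<^sub>1\<close> and is orthogonal to \<open>V\<^sub>1 \<inter> V\<^sub>2\<close>;
  split it as \<open>u = p + q\<close> with \<open>p = P\<^sub>2 u\<close>. As \<open>p\<close> is orthogonal to \<open>V\<^sub>1 \<inter> V\<^sub>2\<close> as well, the
  angle bound gives \<open>|p| \<le> cos \<theta> |u|\<close>, hence \<open>|q| \<ge> sin \<theta> |u|\<close>. On the other hand
  \<open>|q|\<^sup>2 = \<langle>u, q\<rangle> = \<langle>w, q\<rangle> - \<langle>w - P\<^sub>1 w, q\<rangle>\<close>. The first term is at most \<open>d\<^sub>2(w) |q|\<close>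
  because \<open>q \<bottom> V\<^sub>2\<close>. In the second, \<open>w - P\<^sub>1 w \<bottom> u\<close> only sees the component of \<open>q\<close>
  orthogonal to \<open>u\<close>, of length \<open>|q| |p| / |u| \<le> cos \<theta> |q|\<close>. So \<open>|q| \<le> cos \<theta> d\<^sub>1(w) + d\<^sub>2(w)\<close>.\<close>

lemma parallelogram_midpoint:
  fixes a b w :: "'a::real_inner"
  shows "(norm (a - b))\<^sup>2 = 2 * (norm (w - a))\<^sup>2 + 2 * (norm (w - b))\<^sup>2
           - 4 * (norm (w - (1/2) *\<^sub>R (a + b)))\<^sup>2"
  unfolding power2_norm_eq_inner
  by (simp add: inner_diff_left inner_diff_right inner_add_left inner_add_right inner_commute
      algebra_simps)

lemma minimizing_sequence_Cauchy:
  fixes S :: "'a::real_inner set"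
  assumes "convex S" "\<And>n. y n \<in> S" "(\<lambda>n. dist w (y n)) \<longlonglongrightarrow> infdist w S"
  shows "Cauchy y"
proof (rule metric_CauchyI)
  fix \<epsilon> :: real assume "\<epsilon> > 0"
  define \<delta> where "\<delta> = infdist w S"
  have "(\<lambda>n. (norm (w - y n))\<^sup>2) \<longlonglongrightarrow> \<delta>\<^sup>2"
    using tendsto_power[OF assms(3), of 2] unfolding \<delta>_def dist_norm .
  moreover have "\<delta>\<^sup>2 < \<delta>\<^sup>2 + \<epsilon>\<^sup>2 / 4" using \<open>\<epsilon> > 0\<close> by simp
  ultimately have "\<forall>\<^sub>F n in sequentially. (norm (w - y n))\<^sup>2 < \<delta>\<^sup>2 + \<epsilon>\<^sup>2 / 4"
    by (rule order_tendstoD(2))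
  then obtain M where M: "\<And>n. n \<ge> M \<Longrightarrow> (norm (w - y n))\<^sup>2 < \<delta>\<^sup>2 + \<epsilon>\<^sup>2 / 4"
    unfolding eventually_sequentially by blast
  show "\<exists>M. \<forall>m\<ge>M. \<forall>n\<ge>M. dist (y m) (y n) < \<epsilon>"
  proof (intro exI allI impI)
    fix m n assume "M \<le> m" "M \<le> n"
    have "(1/2) *\<^sub>R y m + (1/2) *\<^sub>R y n \<in> S"
      using convexD[OF assms(1) assms(2)[of m] assms(2)[of n], of "1/2" "1/2"] by simp
    then have "\<delta> \<le> norm (w - (1/2) *\<^sub>R (y m + y n))"
      unfolding \<delta>_def by (metis dist_norm infdist_le scaleR_add_right)
    then have "\<delta>\<^sup>2 \<le> (norm (w - (1/2) *\<^sub>R (y m + y n)))\<^sup>2"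
      unfolding \<delta>_def using infdist_nonneg power_mono by blast
    then have "(norm (y m - y n))\<^sup>2 < \<epsilon>\<^sup>2"
      using parallelogram_midpoint[of "y m" "y n" w] M[OF \<open>M \<le> m\<close>] M[OF \<open>M \<le> n\<close>]
      by linarith
    then show "dist (y m) (y n) < \<epsilon>"
      using \<open>\<epsilon> > 0\<close> unfolding dist_norm by (simp add: power_less_imp_less_base)
  qed
qed

lemma nearest_point_exists:
  fixes S :: "'a::{real_inner, complete_space} set"
  assumes "convex S" "closed S" "S \<noteq> {}"
  obtains p where "p \<in> S" "\<And>z. z \<in> S \<Longrightarrow> dist w p \<le> dist w z"
proof -
  define \<delta> where "\<delta> = infdist w S"
  have "\<exists>y\<in>S. dist w y < \<delta> + inverse (real (Suc n))" for n
  proof -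
    have "(INF a\<in>S. dist w a) < \<delta> + inverse (real (Suc n))"
      using infdist_notempty[OF assms(3)] \<delta>_def by simp
    then show ?thesis using assms(3) by (subst (asm) cINF_less_iff) auto
  qed
  then obtain y where yS: "\<And>n. y n \<in> S" and y: "\<And>n. dist w (y n) < \<delta> + inverse (real (Suc n))"
    by metis
  have lim: "(\<lambda>n. dist w (y n)) \<longlonglongrightarrow> \<delta>"
  proof (rule real_tendsto_sandwich)
    show "\<forall>\<^sub>F n in sequentially. \<delta> \<le> dist w (y n)"
      using yS unfolding \<delta>_def by (simp add: infdist_le)
    show "\<forall>\<^sub>F n in sequentially. dist w (y n) \<le> \<delta> + inverse (real (Suc n))"
      using y by (simp add: less_imp_le)
    show "(\<lambda>n. \<delta> + inverse (real (Suc n))) \<longlonglongrightarrow> \<delta>"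
      by (rule LIMSEQ_inverse_real_of_nat_add)
  qed simp
  obtain p where p: "y \<longlonglongrightarrow> p"
    using minimizing_sequence_Cauchy[OF assms(1) yS lim[unfolded \<delta>_def]]
    by (metis Cauchy_convergent_iff convergent_def)
  have "p \<in> S" using assms(2) yS p closed_sequentially by blast
  moreover have "dist w p = \<delta>"
    using LIMSEQ_unique[OF tendsto_dist[OF tendsto_const p] lim] .
  ultimately show ?thesis using that unfolding \<delta>_def by (simp add: infdist_le)
qed

lemma power2_norm_diff_scaleR:
  fixes a v :: "'a::real_inner"
  shows "(norm (a - t *\<^sub>R v))\<^sup>2 = (norm a)\<^sup>2 - 2 * t * inner a v + t\<^sup>2 * (norm v)\<^sup>2"
  unfolding power2_norm_eq_inner
  by (simp add: inner_diff_left inner_diff_right inner_commute power2_eq_square algebra_simps)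

lemma nearest_point_subspace_orthogonal:
  fixes V :: "'a::real_inner set"
  assumes "subspace V" "p \<in> V" "\<And>z. z \<in> V \<Longrightarrow> dist w p \<le> dist w z" "v \<in> V"
  shows "inner (w - p) v = 0"
proof (cases "v = 0")
  case False
  define a where "a = w - p"
  define t where "t = inner a v / (norm v)\<^sup>2"
  have "p + t *\<^sub>R v \<in> V" using assms(1,2,4) by (simp add: subspace_add subspace_scale)
  from assms(3)[OF this] have "norm a \<le> norm (a - t *\<^sub>R v)"
    by (simp add: a_def dist_norm diff_diff_eq)
  then have "(norm a)\<^sup>2 \<le> (norm (a - t *\<^sub>R v))\<^sup>2" by (simp add: power_mono)
  also have "\<dots> = (norm a)\<^sup>2 - (inner a v)\<^sup>2 / (norm v)\<^sup>2"
    using False unfolding power2_norm_diff_scaleR t_def by (simp add: field_simps power2_eq_square)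
  finally show ?thesis unfolding a_def using False by (simp add: divide_le_0_iff)
qed simp

lemma
  fixes V :: "'a::{real_inner, complete_space} set"
  assumes "subspace V" "closed V"
  shows orth_proj_in: "orth_proj V w \<in> V"
    and orth_proj_orthogonal: "v \<in> V \<Longrightarrow> inner (w - orth_proj V w) v = 0"
proof -
  have "\<exists>!p. p \<in> V \<and> (\<forall>v\<in>V. inner (w - p) v = 0)"
  proof (rule ex_ex1I)
    have "convex V" "V \<noteq> {}" using assms(1) subspace_imp_convex subspace_0 by blast+
    then obtain p where "p \<in> V" "\<And>z. z \<in> V \<Longrightarrow> dist w p \<le> dist w z"
      using nearest_point_exists assms(2) by metis
    then show "\<exists>p. p \<in> V \<and> (\<forall>v\<in>V. inner (w - p) v = 0)"
      using nearest_point_subspace_orthogonal[OF assms(1)] by blast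
  next
    fix p p' assume p: "p \<in> V \<and> (\<forall>v\<in>V. inner (w - p) v = 0)"
      and p': "p' \<in> V \<and> (\<forall>v\<in>V. inner (w - p') v = 0)"
    then have "inner (w - p) (p' - p) = 0" "inner (w - p') (p' - p) = 0"
      using assms(1) by (auto simp: subspace_diff)
    then have "inner (p' - p) (p' - p) = 0" by (simp add: inner_diff_left inner_diff_right)
    then show "p = p'" by simp
  qed
  then have "orth_proj V w \<in> V \<and> (\<forall>v\<in>V. inner (w - orth_proj V w) v = 0)"
    unfolding orth_proj_def by (rule theI')
  then show "orth_proj V w \<in> V" "v \<in> V \<Longrightarrow> inner (w - orth_proj V w) v = 0" by auto
qed

lemma norm_diff_orth_proj_le_infdist:
  fixes V :: "'a::{real_inner, complete_space} set"
  assumes "subspace V" "closed V"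
  shows "norm (w - orth_proj V w) \<le> infdist w V"
proof -
  let ?p = "orth_proj V w"
  have "norm (w - ?p) \<le> dist w y" if "y \<in> V" for y
  proof -
    have "?p - y \<in> V" using orth_proj_in[OF assms] that assms(1) by (simp add: subspace_diff)
    then have "orthogonal (w - ?p) (?p - y)"
      unfolding orthogonal_def by (rule orth_proj_orthogonal[OF assms])
    from norm_add_Pythagorean[OF this]
    have "(norm (w - ?p))\<^sup>2 \<le> (norm (w - y))\<^sup>2" by simp
    then show ?thesis unfolding dist_norm by (rule power2_le_imp_le) simp
  qed
  moreover have "V \<noteq> {}" using assms(1) subspace_0 by blast
  ultimately show ?thesis unfolding infdist_notempty[OF \<open>V \<noteq> {}\<close>] by (intro cINF_greatest) auto
qed

lemma inner_le_infdist_mul_norm: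
  fixes V :: "'a::real_inner set"
  assumes "V \<noteq> {}" "\<forall>v\<in>V. inner q v = 0"
  shows "inner w q \<le> infdist w V * norm q"
proof (cases "q = 0")
  case False
  have "inner w q / norm q \<le> dist w y" if "y \<in> V" for y
  proof -
    have "inner w q = inner (w - y) q"
      using assms(2) that by (simp add: inner_diff_left inner_commute[of y q])
    also have "\<dots> \<le> norm (w - y) * norm q" by (rule norm_cauchy_schwarz)
    finally show ?thesis using False by (simp add: pos_divide_le_eq dist_norm)
  qed
  then have "inner w q / norm q \<le> infdist w V"
    unfolding infdist_notempty[OF assms(1)] using assms(1) by (intro cINF_greatest) auto
  then show ?thesis using False by (simp add: pos_divide_le_eq)
qed simp

lemma norm_orthogonal_summand_ge:
  fixes p q :: "'a::real_inner"
  assumes "inner p q = 0" "norm p \<le> c * norm (p + q)" "0 \<le> c" "c \<le> 1"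
  shows "sqrt (1 - c\<^sup>2) * norm (p + q) \<le> norm q"
proof -
  have "(norm (p + q))\<^sup>2 = (norm p)\<^sup>2 + (norm q)\<^sup>2"
    by (rule norm_add_Pythagorean) (simp add: orthogonal_def assms(1))
  moreover have "(norm p)\<^sup>2 \<le> c\<^sup>2 * (norm (p + q))\<^sup>2"
    using power_mono[OF assms(2), of 2] by (simp add: power_mult_distrib)
  moreover have "(sqrt (1 - c\<^sup>2))\<^sup>2 = 1 - c\<^sup>2"
    using assms(3,4) by (simp add: power_le_one)
  ultimately have "(sqrt (1 - c\<^sup>2) * norm (p + q))\<^sup>2 \<le> (norm q)\<^sup>2"
    by (simp only: power_mult_distrib left_diff_distrib mult_1)
  then show ?thesis by (rule power2_le_imp_le) simp
qed

lemma abs_inner_orthogonal_summand_le: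
  fixes e p q :: "'a::real_inner"
  assumes "inner e (p + q) = 0" "inner p q = 0" "norm p \<le> c * norm (p + q)" "0 \<le> c"
  shows "\<bar>inner e q\<bar> \<le> c * norm e * norm q"
proof (cases "p + q = 0")
  case True
  then have "q = - p" by (simp add: eq_neg_iff_add_eq_0 add.commute)
  then have "q = 0" using assms(2) by simp
  then show ?thesis by simp
next
  case False
  define u where "u = p + q"
  \<comment> \<open>\<open>q - t u\<close> is the component of \<open>q\<close> orthogonal to \<open>u\<close>; its length is \<open>\<bar>q\<bar> \<bar>p\<bar> / \<bar>u\<bar>\<close>.\<close>
  define t where "t = (norm q)\<^sup>2 / (norm u)\<^sup>2"
  have "u \<noteq> 0" using False u_def by simp
  have "inner q u = (norm q)\<^sup>2"
    unfolding u_def using assms(2) by (simp add: inner_add_right inner_commute power2_norm_eq_inner)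
  then have "(norm (q - t *\<^sub>R u))\<^sup>2 = (norm q)\<^sup>2 - 2 * t * (norm q)\<^sup>2 + t\<^sup>2 * (norm u)\<^sup>2"
    by (simp add: power2_norm_diff_scaleR)
  also have "\<dots> = (norm q)\<^sup>2 * ((norm u)\<^sup>2 - (norm q)\<^sup>2) / (norm u)\<^sup>2"
    unfolding t_def using \<open>u \<noteq> 0\<close> by (simp add: field_simps power2_eq_square)
  also have "(norm u)\<^sup>2 - (norm q)\<^sup>2 = (norm p)\<^sup>2"
    unfolding u_def by (subst norm_add_Pythagorean) (simp_all add: orthogonal_def assms(2))
  also have "(norm q)\<^sup>2 * (norm p)\<^sup>2 / (norm u)\<^sup>2 \<le> (norm q)\<^sup>2 * (c * norm u)\<^sup>2 / (norm u)\<^sup>2"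
    using assms(3) unfolding u_def by (intro divide_right_mono mult_left_mono power_mono) auto
  also have "\<dots> = (c * norm q)\<^sup>2"
    using \<open>u \<noteq> 0\<close> by (simp add: power_mult_distrib)
  finally have "norm (q - t *\<^sub>R u) \<le> c * norm q"
    by (rule power2_le_imp_le) (simp add: assms(4))
  have "\<bar>inner e q\<bar> = \<bar>inner e (q - t *\<^sub>R u)\<bar>"
    using assms(1) unfolding u_def by (simp add: inner_diff_right)
  also have "\<dots> \<le> norm e * norm (q - t *\<^sub>R u)" by (rule Cauchy_Schwarz_ineq2)
  also have "\<dots> \<le> norm e * (c * norm q)"
    using \<open>norm (q - t *\<^sub>R u) \<le> c * norm q\<close> by (simp add: mult_left_mono)
  finally show ?thesis by (simp add: ac_simps)
qed

lemma exists_nonzero_orthogonal_to_subspace: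
  fixes M :: "'a::{real_inner, complete_space} set"
  assumes "subspace M" "closed M" "subspace A" "M \<subseteq> A" "\<not> A \<subseteq> M"
  obtains a where "a \<in> A" "a \<noteq> 0" "\<forall>m\<in>M. inner a m = 0"
proof -
  obtain a0 where "a0 \<in> A" "a0 \<notin> M" using assms(5) by blast
  moreover have "orth_proj M a0 \<in> M" by (rule orth_proj_in[OF assms(1,2)])
  ultimately have "a0 - orth_proj M a0 \<in> A" "a0 - orth_proj M a0 \<noteq> 0"
    using assms(3,4) by (auto simp: subspace_diff)
  moreover have "\<forall>m\<in>M. inner (a0 - orth_proj M a0) m = 0"
    using orth_proj_orthogonal[OF assms(1,2)] by blast
  ultimately show ?thesis by (rule that)
qed

lemma abs_inner_le_friedrichs_cos:
  fixes V1 V2 :: "'a::real_inner set"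
  assumes "subspace V1" "subspace V2" "x \<in> V1" "y \<in> V2"
    "\<forall>m\<in>V1 \<inter> V2. inner x m = 0" "\<forall>m\<in>V1 \<inter> V2. inner y m = 0"
  shows "\<bar>inner x y\<bar> \<le> friedrichs_cos V1 V2 * norm x * norm y"
proof (cases "x = 0 \<or> y = 0")
  case False
  have "\<bar>inner (x /\<^sub>R norm x) (y /\<^sub>R norm y)\<bar> \<le> friedrichs_cos V1 V2"
    unfolding friedrichs_cos_def
  proof (rule cSup_upper)
    show "bdd_above {\<bar>inner v1 v2\<bar> | v1 v2. v1 \<in> V1 \<and> v2 \<in> V2 \<and> norm v1 = 1 \<and> norm v2 = 1 \<and>
      (\<forall>u\<in>V1 \<inter> V2. inner v1 u = 0) \<and> (\<forall>u\<in>V1 \<inter> V2. inner v2 u = 0)}"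
      by (rule bdd_aboveI[of _ 1]) (force intro: order_trans[OF Cauchy_Schwarz_ineq2])
    show "\<bar>inner (x /\<^sub>R norm x) (y /\<^sub>R norm y)\<bar> \<in> {\<bar>inner v1 v2\<bar> | v1 v2. v1 \<in> V1 \<and> v2 \<in> V2 \<and>
      norm v1 = 1 \<and> norm v2 = 1 \<and> (\<forall>u\<in>V1 \<inter> V2. inner v1 u = 0) \<and> (\<forall>u\<in>V1 \<inter> V2. inner v2 u = 0)}"
      using assms False
      by (intro CollectI exI[of _ "x /\<^sub>R norm x"] exI[of _ "y /\<^sub>R norm y"]) (auto simp: subspace_scale)
  qed
  then have "\<bar>inner x y\<bar> / (norm x * norm y) \<le> friedrichs_cos V1 V2"
    using False by (simp add: abs_mult divide_inverse ac_simps)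
  then show ?thesis using False by (simp add: pos_divide_le_eq mult.assoc)
qed auto

lemma friedrichs_cos_bounds:
  fixes V1 V2 :: "'a::{real_inner, complete_space} set"
  assumes "subspace V1" "closed V1" "subspace V2" "closed V2" "\<not> V1 \<subseteq> V2" "\<not> V2 \<subseteq> V1"
  shows "0 \<le> friedrichs_cos V1 V2" "friedrichs_cos V1 V2 \<le> 1"
proof -
  let ?S = "{\<bar>inner v1 v2\<bar> | v1 v2. v1 \<in> V1 \<and> v2 \<in> V2 \<and> norm v1 = 1 \<and> norm v2 = 1 \<and>
    (\<forall>u\<in>V1 \<inter> V2. inner v1 u = 0) \<and> (\<forall>u\<in>V1 \<inter> V2. inner v2 u = 0)}"
  have M: "subspace (V1 \<inter> V2)" "closed (V1 \<inter> V2)"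
    using assms(1-4) by (simp_all add: subspace_inter closed_Int)
  obtain a where a: "a \<in> V1" "a \<noteq> 0" "\<forall>m\<in>V1 \<inter> V2. inner a m = 0"
    using exists_nonzero_orthogonal_to_subspace[OF M assms(1)] assms(5) by blast
  obtain b where b: "b \<in> V2" "b \<noteq> 0" "\<forall>m\<in>V1 \<inter> V2. inner b m = 0"
    using exists_nonzero_orthogonal_to_subspace[OF M assms(3)] assms(6) by blast
  have "\<bar>inner (a /\<^sub>R norm a) (b /\<^sub>R norm b)\<bar> \<in> ?S"
    using a b assms(1,3)
    by (intro CollectI exI[of _ "a /\<^sub>R norm a"] exI[of _ "b /\<^sub>R norm b"]) (auto simp: subspace_scale)
  then have "?S \<noteq> {}" by blast
  show "friedrichs_cos V1 V2 \<le> 1"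
    unfolding friedrichs_cos_def using \<open>?S \<noteq> {}\<close>
    by (intro cSup_least) (force intro: order_trans[OF Cauchy_Schwarz_ineq2])+
  have "0 \<le> friedrichs_cos V1 V2 * norm a * norm b"
    using abs_inner_le_friedrichs_cos[OF assms(1,3) a(1) b(1) a(3) b(3)] abs_ge_zero order_trans
    by blast
  then show "0 \<le> friedrichs_cos V1 V2" using a(2) b(2) by (simp add: zero_le_mult_iff)
qed

lemma norm_orth_proj_le:
  fixes V :: "'a::{real_inner, complete_space} set"
  assumes "subspace V" "closed V" "0 \<le> c"
    and "\<bar>inner x (orth_proj V x)\<bar> \<le> c * norm x * norm (orth_proj V x)"
  shows "norm (orth_proj V x) \<le> c * norm x"
proof -
  let ?p = "orth_proj V x"
  have "(norm ?p)\<^sup>2 = inner x ?p"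
    using orth_proj_orthogonal[OF assms(1,2) orth_proj_in[OF assms(1,2)], of x]
    by (simp add: inner_diff_left power2_norm_eq_inner)
  also have "\<dots> \<le> c * norm x * norm ?p" using assms(4) by linarith
  finally show ?thesis by (cases "?p = 0") (auto simp: power2_eq_square assms(3))
qed

lemma norm_orth_proj_complement_le:
  fixes V1 V2 :: "'a::{real_inner, complete_space} set" and w w0 :: 'a
  defines "u \<equiv> orth_proj V1 w - w0"
  assumes "subspace V1" "closed V1" "subspace V2" "closed V2" "0 \<le> c" "w0 \<in> V1 \<inter> V2"
    and "norm (orth_proj V2 u) \<le> c * norm u"
  shows "norm (u - orth_proj V2 u) \<le> c * infdist w V1 + infdist w V2"
proof (cases "u - orth_proj V2 u = 0")
  case True then show ?thesis using assms(6) by (simp add: infdist_nonneg)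
next
  case False
  define w1 where "w1 = orth_proj V1 w"
  define p where "p = orth_proj V2 u"
  define q where "q = u - p"
  have "q \<noteq> 0" using False q_def p_def by simp
  have "u \<in> V1"
    unfolding u_def using orth_proj_in[OF assms(2,3)] assms(2,7) by (auto simp: subspace_diff)
  have q_perp: "\<forall>v\<in>V2. inner q v = 0"
    unfolding q_def p_def using orth_proj_orthogonal[OF assms(4,5)] by blast
  have "p \<in> V2" unfolding p_def by (rule orth_proj_in[OF assms(4,5)])
  then have "inner p q = 0" using q_perp by (simp add: inner_commute[of p q])
  have "u = p + q" unfolding q_def by simp
  have "inner u q = (norm q)\<^sup>2"
    unfolding \<open>u = p + q\<close> using \<open>inner p q = 0\<close> by (simp add: inner_add_left power2_norm_eq_inner)
  moreover have "inner w q = inner (w - w1) q + inner u q + inner w0 q"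
    unfolding u_def w1_def by (simp add: inner_diff_left)
  moreover have "inner w0 q = 0" using q_perp assms(7) by (simp add: inner_commute[of w0 q])
  moreover have "inner w q \<le> infdist w V2 * norm q"
    using q_perp assms(4) subspace_0 by (intro inner_le_infdist_mul_norm) auto
  moreover have "- inner (w - w1) q \<le> c * infdist w V1 * norm q"
  proof -
    have "inner (w - w1) (p + q) = 0"
      using orth_proj_orthogonal[OF assms(2,3) \<open>u \<in> V1\<close>] unfolding w1_def \<open>u = p + q\<close> .
    from abs_inner_orthogonal_summand_le[OF this \<open>inner p q = 0\<close>
        assms(8)[folded p_def, unfolded \<open>u = p + q\<close>] assms(6)]
    have "\<bar>inner (w - w1) q\<bar> \<le> c * norm (w - w1) * norm q" .
    moreover have "norm (w - w1) \<le> infdist w V1"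
      unfolding w1_def by (rule norm_diff_orth_proj_le_infdist[OF assms(2,3)])
    then have "c * norm (w - w1) * norm q \<le> c * infdist w V1 * norm q"
      using assms(6) by (simp add: mult_left_mono mult_right_mono)
    ultimately show ?thesis by linarith
  qed
  ultimately have "norm q * norm q \<le> (c * infdist w V1 + infdist w V2) * norm q"
    unfolding power2_eq_square distrib_right by linarith
  then show ?thesis using \<open>q \<noteq> 0\<close> unfolding q_def p_def by simp
qed

lemma norm_orth_proj_diff_le:
  fixes V1 V2 :: "'a::{real_inner, complete_space} set"
  assumes "subspace V1" "closed V1" "subspace V2" "closed V2" "0 \<le> c" "c \<le> 1"
    and cos_bound: "\<And>x y. x \<in> V1 \<Longrightarrow> y \<in> V2 \<Longrightarrow> \<forall>m\<in>V1 \<inter> V2. inner x m = 0 \<Longrightarrow>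
      \<forall>m\<in>V1 \<inter> V2. inner y m = 0 \<Longrightarrow> \<bar>inner x y\<bar> \<le> c * norm x * norm y"
  shows "sqrt (1 - c\<^sup>2) * norm (orth_proj V1 w - orth_proj (V1 \<inter> V2) w)
    \<le> c * infdist w V1 + infdist w V2"
proof -
  let ?M = "V1 \<inter> V2"
  have M: "subspace ?M" "closed ?M"
    using assms(1-4) by (simp_all add: subspace_inter closed_Int)
  define w0 where "w0 = orth_proj ?M w"
  define u where "u = orth_proj V1 w - w0"
  define p where "p = orth_proj V2 u"
  have "w0 \<in> ?M" unfolding w0_def by (rule orth_proj_in[OF M])
  have "u \<in> V1"
    unfolding u_def using orth_proj_in[OF assms(1,2)] \<open>w0 \<in> ?M\<close> assms(1)
    by (auto simp: subspace_diff)
  have u_perp: "\<forall>m\<in>?M. inner u m = 0"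
    using orth_proj_orthogonal[OF M, of _ w] orth_proj_orthogonal[OF assms(1,2), of _ w]
    unfolding u_def w0_def by (simp add: inner_diff_left inner_diff_right)
  have "p \<in> V2" unfolding p_def by (rule orth_proj_in[OF assms(3,4)])
  have "\<forall>m\<in>?M. inner p m = 0"
    using u_perp orth_proj_orthogonal[OF assms(3,4), of _ u]
    unfolding p_def by (simp add: inner_diff_left)
  have "norm p \<le> c * norm u"
    unfolding p_def using cos_bound[OF \<open>u \<in> V1\<close> \<open>p \<in> V2\<close> u_perp \<open>\<forall>m\<in>?M. inner p m = 0\<close>]
    by (intro norm_orth_proj_le assms(3-5)) (simp add: p_def)
  then have "norm (u - p) \<le> c * infdist w V1 + infdist w V2"
    unfolding u_def p_def by (rule norm_orth_proj_complement_le[OF assms(1-5) \<open>w0 \<in> ?M\<close>])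
  moreover have "inner p (u - p) = 0"
    using orth_proj_orthogonal[OF assms(3,4) \<open>p \<in> V2\<close>, of u] unfolding p_def
    by (simp add: inner_commute)
  then have "sqrt (1 - c\<^sup>2) * norm u \<le> norm (u - p)"
    using norm_orthogonal_summand_ge[of p "u - p" c] \<open>norm p \<le> c * norm u\<close> assms(5,6) by simp
  ultimately show ?thesis unfolding u_def w0_def by linarith
qed

theorem lemma3p25:
  fixes V1 V2 :: "'a::{real_inner, complete_space} set" and w :: 'a
  assumes "subspace V1" "closed V1" "subspace V2" "closed V2"
    and "\<not> V1 \<subseteq> V2" "\<not> V2 \<subseteq> V1"
    and "friedrichs_angle V1 V2 > 0"
  shows "norm (orth_proj V1 w - orth_proj (V1 \<inter> V2) w)
    \<le> (cos (friedrichs_angle V1 V2) * infdist w V1 + infdist w V2)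
       / sin (friedrichs_angle V1 V2)"
proof -
  define c where "c = friedrichs_cos V1 V2"
  have "0 \<le> c" "c \<le> 1" unfolding c_def using friedrichs_cos_bounds[OF assms(1-6)] by auto
  moreover have "c \<noteq> 1" using assms(7) unfolding friedrichs_angle_def c_def[symmetric] by auto
  ultimately have "cos (friedrichs_angle V1 V2) = c" "sin (friedrichs_angle V1 V2) = sqrt (1 - c\<^sup>2)"
    "sqrt (1 - c\<^sup>2) > 0"
    unfolding friedrichs_angle_def c_def[symmetric] by (auto simp: sin_arccos abs_square_less_1)
  moreover have "sqrt (1 - c\<^sup>2) * norm (orth_proj V1 w - orth_proj (V1 \<inter> V2) w)
      \<le> c * infdist w V1 + infdist w V2"
    using norm_orth_proj_diff_le[OF assms(1-4) \<open>0 \<le> c\<close> \<open>c \<le> 1\<close>]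
      abs_inner_le_friedrichs_cos[OF assms(1,3)] unfolding c_def by blast
  ultimately show ?thesis by (simp add: pos_le_divide_eq mult.commute)
qed

end
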